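(* Let $G:[0,\nu)\to[0,\infty)$ be strictly increasing with $G(0)=0$, twice differentiable with $G'(x)>0$ for all $x\in(0,\nu)$, and with range $[0,\infty)$. Then the function $x\mapsto G^{-1}(G(x)+G(c))$ is concave for all $c>0$ if and only if the function $u(x)=1/G'(x)$ is concave. *)

theory Defs
  imports "HOL-Analysis.Analysis"
begin

end

theory Submission
  imports Defs
begin

(* Write u = 1 / G' and H x = G^-1 (G x + G c). Differentiating G (H x) = G x + G c gives
   H' = u o H / u, and differentiating once more
   H'' x = u (H x) / (u x)^2 * (u' (H x) - u' x).
   Since H x > x, an antitone u' (that is, a concave u) makes H'' nonpositive for every c.
   Conversely every pair x < y is of the form y = H x, with c = G^-1 (G y - G x), so
   concavity of H for all c forces u' y <= u' x. *)

lemma concave_on_imp_antimono_deriv: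
  fixes f f' :: "real \<Rightarrow> real"
  assumes conc: "concave_on A f" and conn: "connected A"
    and der: "\<And>x. x \<in> interior A \<Longrightarrow> (f has_real_derivative f' x) (at x)"
  shows "antimono_on (interior A) f'"
proof (rule monotone_onI)
  have cv: "convex_on A (\<lambda>x. - f x)"
    using conc by (simp add: concave_on_def)
  have tangent: "f b - f a \<le> f' a * (b - a)" if a: "a \<in> interior A" and b: "b \<in> interior A" for a b
  proof -
    have "((\<lambda>x. - f x) has_real_derivative - f' a) (at a within A)"
      using DERIV_minus[OF der[OF a]] by (rule has_field_derivative_at_within)
    from convex_on_imp_above_tangent[OF cv conn a interior_subset[THEN subsetD, OF b] this]
    show ?thesis by simp
  qed
  fix x y assume x: "x \<in> interior A" and y: "y \<in> interior A" and "x \<le> y"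
  show "f' y \<le> f' x"
  proof (cases "x = y")
    case False
    have "f' y * (y - x) \<le> f' x * (y - x)"
      using tangent[OF x y] tangent[OF y x] by (simp add: algebra_simps)
    then show ?thesis
      using \<open>x \<le> y\<close> False by (simp add: mult_le_cancel_right)
  qed simp
qed
lemma mvt_interior:
  fixes f f' :: "real \<Rightarrow> real"
  assumes conv: "convex A" and cont: "continuous_on A f"
    and der: "\<And>x. x \<in> interior A \<Longrightarrow> (f has_real_derivative f' x) (at x)"
    and ab: "a \<in> A" "b \<in> A" "a < b"
  obtains \<xi> where "a < \<xi>" "\<xi> < b" "\<xi> \<in> interior A" "f b - f a = f' \<xi> * (b - a)"
proof -
  have seg: "{a..b} \<subseteq> A"
    using connected_contains_Icc[OF convex_connected[OF conv] ab(1,2)] .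
  then have open_seg: "{a<..<b} \<subseteq> interior A"
    by (intro interior_maximal) auto
  have "continuous_on {a..b} f"
    using continuous_on_subset[OF cont seg] .
  moreover have "(f has_derivative (*) (f' \<xi>)) (at \<xi>)" if "a < \<xi>" "\<xi> < b" for \<xi>
    using der[unfolded has_field_derivative_def] open_seg that by auto
  ultimately obtain \<xi> where "a < \<xi>" "\<xi> < b" "f b - f a = f' \<xi> * (b - a)"
    using mvt[OF ab(3), of f "\<lambda>\<xi>. (*) (f' \<xi>)"] by blast
  with open_seg that show ?thesis by auto
qed

lemma concave_on_realI:
  fixes f f' :: "real \<Rightarrow> real"
  assumes conv: "convex A" and cont: "continuous_on A f"
    and der: "\<And>x. x \<in> interior A \<Longrightarrow> (f has_real_derivative f' x) (at x)"
    and anti: "antimono_on (interior A) f'"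
  shows "concave_on A f"
proof (rule concave_on_linorderI[OF _ conv])
  fix t x y :: real
  assume t: "0 < t" "t < 1" and xy: "x \<in> A" "y \<in> A" "x < y"
  define z where "z = (1 - t) * x + t * y"
  have gaps: "z - x = t * (y - x)" "y - z = (1 - t) * (y - x)"
    by (simp_all add: z_def algebra_simps)
  have "0 < z - x" "0 < y - z"
    unfolding gaps using t xy by simp_all
  then have z: "x < z" "z < y"
    by simp_all
  then have "z \<in> A"
    using connected_contains_Icc[OF convex_connected[OF conv] xy(1,2)] by auto
  obtain \<xi> where \<xi>: "\<xi> < z" "\<xi> \<in> interior A" "f z - f x = f' \<xi> * (z - x)"
    using mvt_interior[OF conv cont der xy(1) \<open>z \<in> A\<close> z(1)] by blast
  obtain \<eta> where \<eta>: "z < \<eta>" "\<eta> \<in> interior A" "f y - f z = f' \<eta> * (y - z)"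
    using mvt_interior[OF conv cont der \<open>z \<in> A\<close> xy(2) z(2)] by blast
  have "f' \<eta> \<le> f' \<xi>"
    using anti \<xi> \<eta> by (auto dest: monotone_onD)
  then have "f' \<eta> * ((y - z) * (z - x)) \<le> f' \<xi> * ((y - z) * (z - x))"
    using z by (intro mult_right_mono) auto
  then have "(f y - f z) * (z - x) \<le> (f z - f x) * (y - z)"
    unfolding \<xi>(3) \<eta>(3) by (simp add: ac_simps)
  then have "(f y - f z) * t * (y - x) \<le> (f z - f x) * (1 - t) * (y - x)"
    unfolding gaps by (simp add: ac_simps)
  then have "(f y - f z) * t \<le> (f z - f x) * (1 - t)"
    using xy by simp
  then show "(1 - t) * f x + t * f y \<le> f ((1 - t) *\<^sub>R x + t *\<^sub>R y)"
    by (simp add: z_def algebra_simps)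
qed

lemma concave_on_iff_antimono_deriv:
  fixes f f' :: "real \<Rightarrow> real"
  assumes "convex A" "continuous_on A f"
    and "\<And>x. x \<in> interior A \<Longrightarrow> (f has_real_derivative f' x) (at x)"
  shows "concave_on A f \<longleftrightarrow> antimono_on (interior A) f'"
  using concave_on_imp_antimono_deriv[OF _ convex_connected[OF assms(1)] assms(3)]
    concave_on_realI[OF assms] by blast

lemma antimono_on_imp_deriv_nonpos:
  fixes g :: "real \<Rightarrow> real"
  assumes "antimono_on A g" "(g has_real_derivative D) (at x)" "x \<in> interior A"
  shows "D \<le> 0"
proof -
  have "mono_on A (\<lambda>x. - g x)"
    using assms(1) by (auto intro!: monotone_onI dest: monotone_onD)
  then have "- D \<ge> 0"
    using mono_on_imp_deriv_nonneg DERIV_minus[OF assms(2)] assms(3) by blast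
  then show ?thesis by simp
qed

lemma antimono_on_iff_deriv_nonpos:
  fixes g g' :: "real \<Rightarrow> real"
  assumes "open A" "connected A"
    and der: "\<And>x. x \<in> A \<Longrightarrow> (g has_real_derivative g' x) (at x)"
  shows "antimono_on A g \<longleftrightarrow> (\<forall>x\<in>A. g' x \<le> 0)"
proof
  show "\<forall>x\<in>A. g' x \<le> 0" if "antimono_on A g"
    using antimono_on_imp_deriv_nonpos[OF that der] \<open>open A\<close> by (simp add: interior_open)
next
  assume nonpos: "\<forall>x\<in>A. g' x \<le> 0"
  show "antimono_on A g"
  proof (rule monotone_onI)
    fix x y assume "x \<in> A" "y \<in> A" "x \<le> y"
    then have "{x..y} \<subseteq> A"
      using connected_contains_Icc \<open>connected A\<close> by blast
    then show "g y \<le> g x"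
      using deriv_nonpos_imp_antimono[of x y g g'] der nonpos \<open>x \<le> y\<close> by blast
  qed
qed

lemma has_real_derivative_inverse_on:
  fixes f g :: "real \<Rightarrow> real"
  assumes "open S" "x \<in> S"
    and "\<And>x. x \<in> S \<Longrightarrow> (f has_real_derivative f' x) (at x)"
    and "\<And>x. x \<in> S \<Longrightarrow> g (f x) = x"
    and "f' x \<noteq> 0"
  shows "(g has_real_derivative inverse (f' x)) (at (f x))"
  unfolding has_field_derivative_def
  by (rule has_derivative_inverse_on[where f' = "\<lambda>x. (*) (f' x)"])
     (use assms in \<open>auto simp: has_field_derivative_def\<close>)

lemma has_real_derivative_comp_ratio:
  fixes h u :: "real \<Rightarrow> real"
  assumes h: "(h has_real_derivative u (h x) / u x) (at x)"
    and u: "(u has_real_derivative u' x) (at x)"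
    and u_h: "(u has_real_derivative u' (h x)) (at (h x))"
    and "u x \<noteq> 0"
  shows "((\<lambda>t. u (h t) / u t) has_real_derivative u (h x) / (u x)\<^sup>2 * (u' (h x) - u' x)) (at x)"
proof -
  have "((\<lambda>t. u (h t) / u t) has_real_derivative
          (u' (h x) * (u (h x) / u x) * u x - u (h x) * u' x) / (u x * u x)) (at x)"
    by (intro DERIV_divide DERIV_chain2[OF u_h h] u) fact
  also have "(u' (h x) * (u (h x) / u x) * u x - u (h x) * u' x) / (u x * u x)
      = u (h x) / (u x)\<^sup>2 * (u' (h x) - u' x)"
    using \<open>u x \<noteq> 0\<close> by (simp add: field_simps power2_eq_square)
  finally show ?thesis .
qed

locale increasing_scale =
  fixes G G' G'' :: "real \<Rightarrow> real" and \<nu> :: ereal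
  assumes G_strict_mono: "strict_mono_on {x. 0 \<le> x \<and> ereal x < \<nu>} G"
    and G_zero: "G 0 = 0"
    and G_deriv: "\<And>x. 0 \<le> x \<Longrightarrow> ereal x < \<nu> \<Longrightarrow>
               (G has_real_derivative G' x) (at x within {x. 0 \<le> x \<and> ereal x < \<nu>})"
    and G'_deriv: "\<And>x. 0 \<le> x \<Longrightarrow> ereal x < \<nu> \<Longrightarrow>
               (G' has_real_derivative G'' x) (at x within {x. 0 \<le> x \<and> ereal x < \<nu>})"
    and G'_pos: "\<And>x. 0 < x \<Longrightarrow> ereal x < \<nu> \<Longrightarrow> G' x > 0"
    and G_range: "G ` {x. 0 \<le> x \<and> ereal x < \<nu>} = {0..}"
begin

abbreviation I :: "real set" where "I \<equiv> {x. 0 \<le> x \<and> ereal x < \<nu>}"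

abbreviation J :: "real set" where "J \<equiv> {x. 0 < x \<and> ereal x < \<nu>}"

abbreviation Ginv :: "real \<Rightarrow> real" where "Ginv \<equiv> the_inv_into I G"

definition u :: "real \<Rightarrow> real" where "u x = 1 / G' x"

definition u' :: "real \<Rightarrow> real" where "u' x = - G'' x / (G' x)\<^sup>2"

definition shift :: "real \<Rightarrow> real \<Rightarrow> real" where "shift c x = Ginv (G x + G c)"

lemma interior_I: "interior I = J"
proof -
  have "I = {0..} \<inter> ereal -` {..<\<nu>}" "J = {0<..} \<inter> ereal -` {..<\<nu>}"
    by auto
  then show ?thesis
    by (simp add: interior_open open_ereal_vimage)
qed

lemma open_J: "open J"
  by (metis interior_I open_interior)

lemma convex_I: "convex I"
  unfolding is_interval_convex_1[symmetric] is_interval_1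
proof (intro ballI allI impI)
  fix a b x assume "a \<in> I" "b \<in> I" "a \<le> x \<and> x \<le> b"
  then have "0 \<le> x" "ereal x \<le> ereal b" "ereal b < \<nu>"
    by simp_all
  then show "x \<in> I"
    using order.strict_trans1 by blast
qed

lemma convex_J: "convex J"
  using convex_interior[OF convex_I] by (simp add: interior_I)

lemma inj_on_G: "inj_on G I"
  by (rule strict_mono_on_imp_inj_on[OF G_strict_mono])

lemma Ginv_G: "x \<in> I \<Longrightarrow> Ginv (G x) = x"
  by (rule the_inv_into_f_f[OF inj_on_G])

lemma G_Ginv: "0 \<le> y \<Longrightarrow> G (Ginv y) = y"
  using f_the_inv_into_f[OF inj_on_G] G_range by auto

lemma Ginv_in_J: "0 < y \<Longrightarrow> Ginv y \<in> J"
  using the_inv_into_into[OF inj_on_G, of y I] G_range G_Ginv[of y] G_zero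
  by (fastforce simp: less_le)

lemma G_less_iff: "x \<in> I \<Longrightarrow> y \<in> I \<Longrightarrow> G x < G y \<longleftrightarrow> x < y"
  by (rule strict_mono_on_less[OF G_strict_mono])

lemma G_nonneg: "x \<in> I \<Longrightarrow> 0 \<le> G x"
  using G_range by auto

lemma G_pos:
  assumes "x \<in> J"
  shows "0 < G x"
proof -
  have "ereal 0 < ereal x" using assms by simp
  also have "\<dots> < \<nu>" using assms by simp
  finally show ?thesis
    using G_less_iff[of 0 x] G_zero assms by simp
qed

lemma has_real_derivative_at_J:
  assumes "x \<in> J" "\<And>x. x \<in> I \<Longrightarrow> (f has_real_derivative f' x) (at x within I)"
  shows "(f has_real_derivative f' x) (at x)"
proof -
  have "(f has_real_derivative f' x) (at x within J)"
    by (rule has_field_derivative_subset[OF assms(2)]) (use assms(1) in auto)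
  then show ?thesis
    using at_within_open[OF assms(1) open_J] by simp
qed

lemma has_real_derivative_G: "x \<in> J \<Longrightarrow> (G has_real_derivative G' x) (at x)"
  using G_deriv by (intro has_real_derivative_at_J) auto

lemma u_pos: "x \<in> J \<Longrightarrow> 0 < u x"
  using G'_pos by (simp add: u_def)

lemma has_real_derivative_u:
  assumes x: "x \<in> J"
  shows "(u has_real_derivative u' x) (at x)"
proof -
  have "(G' has_real_derivative G'' x) (at x)"
    using G'_deriv x by (intro has_real_derivative_at_J) auto
  then have "((\<lambda>x. 1 / G' x) has_real_derivative (0 * G' x - 1 * G'' x) / (G' x * G' x)) (at x)"
    using G'_pos[of x] x by (intro DERIV_divide DERIV_const) auto
  then show ?thesis
    by (simp add: u_def[abs_def] u'_def power2_eq_square)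
qed

lemma has_real_derivative_Ginv:
  assumes "0 < y"
  shows "(Ginv has_real_derivative u (Ginv y)) (at y)"
proof -
  have "G' (Ginv y) \<noteq> 0"
    using G'_pos Ginv_in_J[OF assms] by force
  then have "(Ginv has_real_derivative inverse (G' (Ginv y))) (at (G (Ginv y)))"
    using Ginv_in_J[OF assms] has_real_derivative_G Ginv_G
    by (intro has_real_derivative_inverse_on[OF open_J]) auto
  then show ?thesis
    using G_Ginv assms by (simp add: u_def inverse_eq_divide)
qed

lemma shift_in_J: "c \<in> J \<Longrightarrow> x \<in> I \<Longrightarrow> shift c x \<in> J"
  unfolding shift_def using G_nonneg G_pos by (intro Ginv_in_J) (auto intro: add_nonneg_pos)

lemma less_shift: "c \<in> J \<Longrightarrow> x \<in> I \<Longrightarrow> x < shift c x"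
  using G_less_iff[of x "shift c x"] shift_in_J[of c x] G_Ginv G_nonneg G_pos
  by (auto simp: shift_def intro: add_nonneg_pos)

lemma shift_onto:
  assumes "x \<in> I" "y \<in> I" "x < y"
  obtains c where "c \<in> J" "shift c x = y"
proof
  have "0 < G y - G x"
    using assms G_less_iff by simp
  then show "Ginv (G y - G x) \<in> J" "shift (Ginv (G y - G x)) x = y"
    using Ginv_in_J G_Ginv Ginv_G assms(2) by (simp_all add: shift_def)
qed

lemma continuous_on_shift:
  assumes "c \<in> J"
  shows "continuous_on I (shift c)"
proof -
  have "continuous_on {0<..} Ginv"
    using has_real_derivative_Ginv DERIV_isCont
    by (intro continuous_at_imp_continuous_on) auto
  moreover have "continuous_on I G"
    by (rule DERIV_continuous_on[where D = G']) (simp add: G_deriv)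
  then have "continuous_on I (\<lambda>x. G x + G c)"
    by (rule continuous_on_add[OF _ continuous_on_const])
  moreover have "(\<lambda>x. G x + G c) ` I \<subseteq> {0<..}"
    using G_nonneg G_pos[OF assms] by (auto intro: add_nonneg_pos)
  ultimately show ?thesis
    unfolding shift_def by (rule continuous_on_compose2)
qed

lemma has_real_derivative_shift:
  assumes "c \<in> J" "x \<in> J"
  shows "(shift c has_real_derivative u (shift c x) / u x) (at x)"
proof -
  have "0 < G x + G c"
    using assms G_pos by (simp add: add_pos_pos)
  moreover have "((\<lambda>x. G x + G c) has_real_derivative G' x) (at x)"
    using has_real_derivative_G[OF assms(2)] by (auto intro: derivative_eq_intros)
  ultimately have "((\<lambda>x. Ginv (G x + G c)) has_real_derivative u (shift c x) * G' x) (at x)"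
    unfolding shift_def by (rule DERIV_chain2[OF has_real_derivative_Ginv])
  then show ?thesis
    by (simp add: shift_def[abs_def] u_def)
qed

lemma concave_on_shift_iff:
  assumes c: "c \<in> J"
  shows "concave_on I (shift c) \<longleftrightarrow> (\<forall>x\<in>J. u' (shift c x) \<le> u' x)"
proof -
  have "concave_on I (shift c) \<longleftrightarrow> antimono_on J (\<lambda>x. u (shift c x) / u x)"
    using concave_on_iff_antimono_deriv[OF convex_I continuous_on_shift[OF c]]
      has_real_derivative_shift[OF c] by (simp add: interior_I)
  also have "\<dots> \<longleftrightarrow> (\<forall>x\<in>J. u (shift c x) / (u x)\<^sup>2 * (u' (shift c x) - u' x) \<le> 0)"
    using shift_in_J[OF c] u_pos[THEN less_imp_neq, THEN not_sym]
    by (intro antimono_on_iff_deriv_nonpos open_J convex_connected convex_J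
        has_real_derivative_comp_ratio has_real_derivative_shift c has_real_derivative_u)
      auto
  also have "\<dots> \<longleftrightarrow> (\<forall>x\<in>J. u' (shift c x) \<le> u' x)"
  proof (intro ball_cong refl)
    fix x assume x: "x \<in> J"
    then have "shift c x \<in> J"
      using shift_in_J[OF c] by simp
    then have pos: "0 < u (shift c x) / (u x)\<^sup>2"
      using u_pos[of x] u_pos[of "shift c x"] x by simp
    show "u (shift c x) / (u x)\<^sup>2 * (u' (shift c x) - u' x) \<le> 0 \<longleftrightarrow> u' (shift c x) \<le> u' x"
      using mult_le_cancel_left_pos[OF pos, of "u' (shift c x) - u' x" 0]
      by (simp only: mult_zero_right diff_le_0_iff_le)
  qed
  finally show ?thesis .
qed

lemma concave_on_u_iff: "concave_on J u \<longleftrightarrow> antimono_on J u'"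
proof -
  have "continuous_on J u"
    using has_real_derivative_u by (intro continuous_at_imp_continuous_on) (auto intro: DERIV_isCont)
  then show ?thesis
    using concave_on_iff_antimono_deriv[OF convex_J _ has_real_derivative_u]
    by (simp add: interior_open[OF open_J])
qed

lemma concave_shifts_iff_concave_u:
  "(\<forall>c. 0 < c \<and> ereal c < \<nu> \<longrightarrow> concave_on I (shift c)) \<longleftrightarrow> concave_on J u"
proof -
  have "(\<forall>c\<in>J. \<forall>x\<in>J. u' (shift c x) \<le> u' x) \<longleftrightarrow> antimono_on J u'"
  proof
    assume shifts: "\<forall>c\<in>J. \<forall>x\<in>J. u' (shift c x) \<le> u' x"
    show "antimono_on J u'"
    proof (rule monotone_onI)
      fix x y assume xy: "x \<in> J" "y \<in> J" "x \<le> y"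
      show "u' y \<le> u' x"
      proof (cases "x = y")
        case False
        then obtain c where "c \<in> J" "shift c x = y"
          using shift_onto[of x y] xy by auto
        then show ?thesis
          using shifts xy(1) by blast
      qed simp
    qed
  next
    assume anti: "antimono_on J u'"
    show "\<forall>c\<in>J. \<forall>x\<in>J. u' (shift c x) \<le> u' x"
    proof (intro ballI)
      fix c x assume c: "c \<in> J" and x: "x \<in> J"
      then have "x \<in> I" by simp
      then show "u' (shift c x) \<le> u' x"
        using monotone_onD[OF anti x shift_in_J[OF c] less_imp_le[OF less_shift[OF c]]] by simp
    qed
  qed
  then show ?thesis
    using concave_on_shift_iff concave_on_u_iff by auto
qed

end

theorem lemma6:
  fixes G G' G'' :: "real \<Rightarrow> real" and \<nu> :: ereal
  assumes nu_pos: "\<nu> > 0"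
    and mono: "strict_mono_on {x. 0 \<le> x \<and> ereal x < \<nu>} G"
    and G0: "G 0 = 0"
    and d1: "\<And>x. 0 \<le> x \<Longrightarrow> ereal x < \<nu> \<Longrightarrow>
               (G has_real_derivative G' x) (at x within {x. 0 \<le> x \<and> ereal x < \<nu>})"
    and d2: "\<And>x. 0 \<le> x \<Longrightarrow> ereal x < \<nu> \<Longrightarrow>
               (G' has_real_derivative G'' x) (at x within {x. 0 \<le> x \<and> ereal x < \<nu>})"
    and dpos: "\<And>x. 0 < x \<Longrightarrow> ereal x < \<nu> \<Longrightarrow> G' x > 0"
    and range: "G ` {x. 0 \<le> x \<and> ereal x < \<nu>} = {0..}"
  shows "(\<forall>c. 0 < c \<and> ereal c < \<nu> \<longrightarrow>
            concave_on {x. 0 \<le> x \<and> ereal x < \<nu>}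
              (\<lambda>x. the_inv_into {x. 0 \<le> x \<and> ereal x < \<nu>} G (G x + G c)))
         \<longleftrightarrow> concave_on {x. 0 < x \<and> ereal x < \<nu>} (\<lambda>x. 1 / G' x)"
proof -
  (* nu_pos is redundant: by range, the domain of G is nonempty. *)
  interpret increasing_scale G G' G'' \<nu>
    using mono G0 d1 d2 dpos range by unfold_locales
  show ?thesis
    using concave_shifts_iff_concave_u by (simp add: shift_def[abs_def] u_def[abs_def])
qed

end
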